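(* Let $G\le\operatorname{Homeo}(\mathfrak{C})$ be simple and vigorous. Let $D\in K_{\mathfrak{C}}$ and let $\gamma\in G$ satisfy $D\gamma\cap D=\varnothing$ and $D\gamma\cup D\neq\mathfrak{C}$. Let $\delta\in\operatorname{Homeo}(\mathfrak{C})$ fix every point of $\mathfrak{C}\setminus D$. Let $H=\langle G\cup\{[\delta,\gamma]\}\rangle$. Then $H$ is simple and vigorous. If moreover $G$ is finitely generated, then so is $H$.
   Context: $\mathfrak{C}$ denotes a Cantor space (a space homeomorphic to $\{0,1\}^\omega$). Groups of homeomorphisms act on the right, products composed left to right, and $[a,b]=a^{-1}b^{-1}ab$. $K_{\mathfrak{C}}$ denotes the set of non-empty proper clopen subsets of $\mathfrak{C}$. For $\gamma\in\operatorname{Homeo}(\mathfrak{C})$, $\operatorname{supp}(\gamma)=\{p\in\mathfrak{C}: p\gamma\neq p\}$. A subset $S\subseteq \operatorname{Homeo}(\mathfrak{C})$ is vigorous if for all clopen $A,B,C\subseteq\mathfrak{C}$ with $B,C$ non-empty proper subsets of $A$ there is $\gamma\in S$ with $\operatorname{supp}(\gamma)\subseteq A$ and $B\gamma\subseteq C$. *)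

theory Defs
  imports "HOL-Analysis.Analysis" "HOL-Algebra.Coset" "HOL-Algebra.Generated_Groups"
begin

type_synonym point = "nat \<Rightarrow> bool"

definition cantor :: "point topology" where
  "cantor = product_topology (\<lambda>_::nat. discrete_topology (UNIV :: bool set)) UNIV"

definition clopen :: "point set \<Rightarrow> bool" where
  "clopen A \<longleftrightarrow> openin cantor A \<and> closedin cantor A"

definition K_C :: "point set set" where
  "K_C = {A. clopen A \<and> A \<noteq> {} \<and> A \<noteq> topspace cantor}"

definition Homeo :: "(point \<Rightarrow> point) set" where
  "Homeo = {f. homeomorphic_map cantor cantor f}"

text \<open>Right action, products composed left to right: f \<otimes> g = apply f first, then g.\<close>
definition homeo_group :: "(point \<Rightarrow> point) monoid" where
  "homeo_group = \<lparr>carrier = Homeo, mult = (\<lambda>f g. g \<circ> f), one = id\<rparr>"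

definition supp :: "(point \<Rightarrow> point) \<Rightarrow> point set" where
  "supp g = {p. g p \<noteq> p}"

definition commutator :: "(point \<Rightarrow> point) \<Rightarrow> (point \<Rightarrow> point) \<Rightarrow> (point \<Rightarrow> point)" where
  "commutator a b = inv\<^bsub>homeo_group\<^esub> a \<otimes>\<^bsub>homeo_group\<^esub> inv\<^bsub>homeo_group\<^esub> b
      \<otimes>\<^bsub>homeo_group\<^esub> a \<otimes>\<^bsub>homeo_group\<^esub> b"

definition vigorous :: "(point \<Rightarrow> point) set \<Rightarrow> bool" where
  "vigorous S \<longleftrightarrow> (\<forall>A B C. clopen A \<and> clopen B \<and> clopen C \<and>
      B \<noteq> {} \<and> C \<noteq> {} \<and> B \<subset> A \<and> C \<subset> A \<longrightarrow>
      (\<exists>g\<in>S. supp g \<subseteq> A \<and> g ` B \<subseteq> C))"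

definition simple_subgroup :: "(point \<Rightarrow> point) set \<Rightarrow> bool" where
  "simple_subgroup G \<longleftrightarrow> G \<noteq> {id} \<and>
     (\<forall>N. N \<lhd> (homeo_group\<lparr>carrier := G\<rparr>) \<longrightarrow> N = {id} \<or> N = G)"

definition fin_gen :: "(point \<Rightarrow> point) set \<Rightarrow> bool" where
  "fin_gen G \<longleftrightarrow> (\<exists>S. finite S \<and> S \<subseteq> G \<and> generate homeo_group S = G)"

end

theory Submission
  imports Defs
begin

text \<open>
  Vigour and finite generation pass from \<open>G\<close> to \<open>H\<close> for trivial reasons; simplicity is the point.
  The map \<open>g \<mapsto> [\<delta>, g]\<close> is a crossed homomorphism, so for a subgroup \<open>T\<close> normalised by \<open>G\<close> the set
  \<open>W(T) = {g \<in> G. [\<delta>, g] \<in> T}\<close> is a subgroup of \<open>G\<close>; it contains every element of \<open>G\<close> supported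
  off \<open>D\<close>, since such elements commute with \<open>\<delta>\<close>.

  For \<open>T = H\<close>, \<open>W(H)\<close> also contains \<open>\<gamma>\<close>, and by vigour it contains, for every \<open>g \<in> G\<close>, an element
  moving \<open>D\<close> into \<open>g D\<close>. Conjugating, \<open>W(H)\<close> contains every element of \<open>G\<close> whose support misses a
  translate of \<open>D\<close>. These elements form a conjugation invariant set containing a nontrivial element,
  so by simplicity they generate \<open>G\<close>: hence \<open>[\<delta>, g] \<in> H\<close> for all \<open>g \<in> G\<close>.

  Now let \<open>N\<close> be a nontrivial normal subgroup of \<open>H\<close>. For vigorous groups a double commutator
  \<open>[[n, g], k]\<close> of a nontrivial \<open>n\<close> with suitable \<open>g, k \<in> G\<close> is a nontrivial element of \<open>G\<close>, so
  \<open>N \<inter> G\<close> is a nontrivial normal subgroup of \<open>G\<close> and \<open>G \<subseteq> N\<close>. Then \<open>W(N)\<close> is normal in \<open>G\<close>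
  (this uses \<open>[\<delta>, G] \<subseteq> H\<close>) and nontrivial, hence equal to \<open>G\<close>; so \<open>[\<delta>, \<gamma>] \<in> N\<close> and \<open>N = H\<close>.
\<close>

section \<open>Clopen sets of the Cantor space\<close>

definition cylinder :: "nat \<Rightarrow> point \<Rightarrow> point set" where
  "cylinder n p = {x. \<forall>i<n. x i = p i}"

lemma topspace_cantor [simp]: "topspace cantor = UNIV"
  by (simp add: cantor_def)

lemma cylinder_self [simp]: "p \<in> cylinder n p"
  by (simp add: cylinder_def)

lemma cylinder_antimono: "m \<le> n \<Longrightarrow> cylinder n p \<subseteq> cylinder m p"
  by (auto simp: cylinder_def)

lemma openin_cantor_iff: "openin cantor S \<longleftrightarrow> (\<forall>x\<in>S. \<exists>n. cylinder n x \<subseteq> S)"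
proof
  assume "openin cantor S"
  show "\<forall>x\<in>S. \<exists>n. cylinder n x \<subseteq> S"
  proof
    fix x assume "x \<in> S"
    then obtain U where U: "finite {i. U i \<noteq> UNIV}" "x \<in> Pi\<^sub>E UNIV U" "Pi\<^sub>E UNIV U \<subseteq> S"
      using \<open>openin cantor S\<close> unfolding cantor_def openin_product_topology_alt by auto
    define n where "n = Suc (Max {i. U i \<noteq> UNIV})"
    have "i < n" if "U i \<noteq> UNIV" for i
      using U(1) that by (simp add: n_def le_imp_less_Suc)
    then have "cylinder n x \<subseteq> Pi\<^sub>E UNIV U"
      using U(2) by (fastforce simp: cylinder_def PiE_def Pi_def)
    then show "\<exists>n. cylinder n x \<subseteq> S" using U(3) by blast
  qed
next
  assume cyl: "\<forall>x\<in>S. \<exists>n. cylinder n x \<subseteq> S"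
  show "openin cantor S"
    unfolding cantor_def openin_product_topology_alt
  proof (intro ballI)
    fix x assume "x \<in> S"
    then obtain n where n: "cylinder n x \<subseteq> S" using cyl by blast
    define U where "U = (\<lambda>i. if i < n then {x i} else (UNIV :: bool set))"
    have "finite {i. U i \<noteq> UNIV}"
      by (rule finite_subset[of _ "{..<n}"]) (auto simp: U_def)
    moreover have "Pi\<^sub>E UNIV U = cylinder n x"
      by (auto simp: PiE_def Pi_def U_def cylinder_def split: if_splits)
    ultimately show "\<exists>U. finite {i \<in> UNIV. U i \<noteq> topspace (discrete_topology UNIV)} \<and>
        (\<forall>i\<in>UNIV. openin (discrete_topology UNIV) (U i)) \<and> x \<in> Pi\<^sub>E UNIV U \<and> Pi\<^sub>E UNIV U \<subseteq> S"
      using n by (intro exI[of _ U]) auto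
  qed
qed

lemma clopen_iff_cylinders:
  "clopen S \<longleftrightarrow> (\<forall>x\<in>S. \<exists>n. cylinder n x \<subseteq> S) \<and> (\<forall>x\<in>-S. \<exists>n. cylinder n x \<subseteq> -S)"
  by (simp add: clopen_def closedin_def openin_cantor_iff Compl_eq_Diff_UNIV)

lemma clopen_Compl: "clopen S \<Longrightarrow> clopen (- S)"
  by (simp add: clopen_iff_cylinders)

lemma clopen_Int: "clopen S \<Longrightarrow> clopen T \<Longrightarrow> clopen (S \<inter> T)"
  by (simp add: clopen_def closedin_Int openin_Int)

lemma clopen_cylinder: "clopen (cylinder n p)"
  unfolding clopen_iff_cylinders
proof (intro conjI ballI)
  fix x assume "x \<in> cylinder n p"
  then have "cylinder n x = cylinder n p" by (auto simp: cylinder_def)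
  then show "\<exists>m. cylinder m x \<subseteq> cylinder n p" by blast
next
  fix x assume "x \<in> - cylinder n p"
  then have "cylinder n x \<subseteq> - cylinder n p" by (auto simp: cylinder_def)
  then show "\<exists>m. cylinder m x \<subseteq> - cylinder n p" by blast
qed

lemma clopen_image_Homeo: "h \<in> Homeo \<Longrightarrow> clopen S \<Longrightarrow> clopen (h ` S)"
  unfolding clopen_def Homeo_def
  using homeomorphic_map_openness homeomorphic_map_closedness by fastforce

lemma clopen_split:
  assumes "openin cantor U" "U \<noteq> {}"
  obtains B C where "clopen B" "clopen C" "B \<noteq> {}" "C \<noteq> {}" "B \<subset> U" "C \<subset> U" "B \<inter> C = {}"
proof -
  obtain x where "x \<in> U" using assms(2) by blast
  then obtain n where n: "cylinder n x \<subseteq> U" using assms(1) openin_cantor_iff by blast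
  define y where "y = x(n := \<not> x n)"
  have sub: "cylinder (Suc n) x \<subseteq> U" "cylinder (Suc n) y \<subseteq> U"
    using n by (auto simp: y_def cylinder_def)
  have disjoint: "cylinder (Suc n) x \<inter> cylinder (Suc n) y = {}"
    by (auto simp: y_def cylinder_def)
  have "x \<in> cylinder (Suc n) x" "y \<in> cylinder (Suc n) y" by simp_all
  with sub disjoint show ?thesis
    by (intro that[of "cylinder (Suc n) x" "cylinder (Suc n) y"] clopen_cylinder) blast+
qed

lemma continuous_map_moves_clopen:
  assumes f: "continuous_map cantor cantor f" and p: "f p \<noteq> p" and U: "openin cantor U" "p \<in> U"
  obtains V where "clopen V" "p \<in> V" "V \<subseteq> U" "f ` V \<inter> V = {}"
proof -
  obtain m where m: "f p m \<noteq> p m" using p by (auto simp: fun_eq_iff)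
  have "openin cantor {x. f x \<in> cylinder (Suc m) (f p)}"
    using openin_continuous_map_preimage[OF f, of "cylinder (Suc m) (f p)"]
      clopen_cylinder[of "Suc m" "f p"]
    by (simp add: clopen_def)
  then obtain n1 where n1: "cylinder n1 p \<subseteq> {x. f x \<in> cylinder (Suc m) (f p)}"
    unfolding openin_cantor_iff by fastforce
  obtain n2 where n2: "cylinder n2 p \<subseteq> U" using U unfolding openin_cantor_iff by blast
  define V where "V = cylinder (max (max n1 n2) (Suc m)) p"
  have V: "V \<subseteq> cylinder n1 p" "V \<subseteq> cylinder n2 p" "V \<subseteq> cylinder (Suc m) p"
    unfolding V_def by (auto intro!: cylinder_antimono)
  have "f x \<in> cylinder (Suc m) (f p)" if "x \<in> V" for x
    using that V(1) n1 by blast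
  moreover have "y \<in> cylinder (Suc m) p" if "y \<in> V" for y
    using that V(3) by blast
  ultimately have "f ` V \<inter> V = {}" using m by (force simp: cylinder_def)
  moreover have "clopen V" unfolding V_def by (rule clopen_cylinder)
  ultimately show ?thesis using V(2) n2 by (intro that[of V]) (auto simp: V_def)
qed

section \<open>The homeomorphism group\<close>

text \<open>The function inverse; plain \<open>inv\<close> would clash with the group inverse syntax of HOL-Algebra.\<close>
abbreviation finv :: "('a \<Rightarrow> 'b) \<Rightarrow> 'b \<Rightarrow> 'a" where
  "finv f \<equiv> Hilbert_Choice.inv f"

lemma Homeo_bij: "f \<in> Homeo \<Longrightarrow> bij f"
  unfolding Homeo_def bij_def
  using homeomorphic_imp_injective_map[of cantor cantor f]
    homeomorphic_imp_surjective_map[of cantor cantor f]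
  by simp

lemma Homeo_inj: "f \<in> Homeo \<Longrightarrow> inj f"
  using Homeo_bij bij_is_inj by blast

lemma Homeo_continuous: "f \<in> Homeo \<Longrightarrow> continuous_map cantor cantor f"
  unfolding Homeo_def by (simp add: homeomorphic_imp_continuous_map)

lemma Homeo_inv_f_f [simp]: "f \<in> Homeo \<Longrightarrow> finv f (f x) = x"
  using Homeo_inj inv_f_f by fastforce

lemma Homeo_f_inv_f [simp]: "f \<in> Homeo \<Longrightarrow> f (finv f x) = x"
  using Homeo_bij bij_is_surj surj_f_inv_f by fastforce

lemma Homeo_finv: "f \<in> Homeo \<Longrightarrow> finv f \<in> Homeo"
proof -
  assume f: "f \<in> Homeo"
  then obtain g where g: "homeomorphic_maps cantor cantor f g"
    unfolding Homeo_def using homeomorphic_map_maps by blast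
  then have "finv f = g"
    by (intro Hilbert_Choice.inv_equality) (auto simp: homeomorphic_maps_def)
  then show ?thesis using g homeomorphic_maps_map[of cantor cantor f g] by (auto simp: Homeo_def)
qed

lemma Homeo_comp: "f \<in> Homeo \<Longrightarrow> g \<in> Homeo \<Longrightarrow> g \<circ> f \<in> Homeo"
  unfolding Homeo_def using homeomorphic_map_compose by blast

lemma Homeo_id: "id \<in> Homeo"
  unfolding Homeo_def by simp

lemma Homeo_finv_comp: "f \<in> Homeo \<Longrightarrow> g \<in> Homeo \<Longrightarrow> finv (g \<circ> f) = finv f \<circ> finv g"
  by (intro Hilbert_Choice.inv_equality) auto

lemma Homeo_finv_finv [simp]: "f \<in> Homeo \<Longrightarrow> finv (finv f) = f"
  using Homeo_bij inv_inv_eq by blast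

lemma group_homeo_group: "group homeo_group"
proof (rule groupI)
  fix x assume "x \<in> carrier homeo_group"
  then have x: "x \<in> Homeo" by (simp add: homeo_group_def)
  then have "finv x \<in> Homeo" "x \<circ> finv x = id" by (simp_all add: Homeo_finv fun_eq_iff)
  then show "\<exists>y\<in>carrier homeo_group. y \<otimes>\<^bsub>homeo_group\<^esub> x = \<one>\<^bsub>homeo_group\<^esub>"
    by (intro bexI[of _ "finv x"]) (simp_all add: homeo_group_def)
qed (simp_all add: homeo_group_def Homeo_comp Homeo_id o_assoc)

lemma carrier_homeo_group [simp]: "carrier homeo_group = Homeo"
  by (simp add: homeo_group_def)

lemma mult_homeo_group [simp]: "f \<otimes>\<^bsub>homeo_group\<^esub> g = g \<circ> f"
  by (simp add: homeo_group_def)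

lemma one_homeo_group [simp]: "\<one>\<^bsub>homeo_group\<^esub> = id"
  by (simp add: homeo_group_def)

lemma m_inv_homeo_group [simp]: "f \<in> Homeo \<Longrightarrow> inv\<^bsub>homeo_group\<^esub> f = finv f"
  by (rule group.inv_equality[OF group_homeo_group]) (simp_all add: fun_eq_iff Homeo_finv)

lemma commutator_eq: "a \<in> Homeo \<Longrightarrow> b \<in> Homeo \<Longrightarrow> commutator a b = b \<circ> a \<circ> finv b \<circ> finv a"
  by (simp add: commutator_def o_assoc)

lemma commutator_Homeo: "a \<in> Homeo \<Longrightarrow> b \<in> Homeo \<Longrightarrow> commutator a b \<in> Homeo"
  by (simp add: commutator_eq Homeo_comp Homeo_finv)

lemma finv_commutator: "a \<in> Homeo \<Longrightarrow> b \<in> Homeo \<Longrightarrow> finv (commutator a b) = a \<circ> b \<circ> finv a \<circ> finv b"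
  by (intro Hilbert_Choice.inv_equality) (simp_all add: commutator_eq)

text \<open>\<open>g \<mapsto> [a, g]\<close> is a crossed homomorphism: \<open>[a, f g] = g\<^sup>-\<^sup>1 [a, f] g [a, g]\<close> in the right action.\<close>

lemma commutator_comp_right:
  "a \<in> Homeo \<Longrightarrow> f \<in> Homeo \<Longrightarrow> g \<in> Homeo \<Longrightarrow>
    commutator a (g \<circ> f) = (g \<circ> commutator a f \<circ> finv g) \<circ> commutator a g"
  by (rule ext) (simp add: commutator_eq Homeo_comp Homeo_finv_comp)

lemma commutator_finv_right:
  "a \<in> Homeo \<Longrightarrow> f \<in> Homeo \<Longrightarrow> commutator a (finv f) = finv f \<circ> finv (commutator a f) \<circ> f"
  by (simp only: finv_commutator) (rule ext, simp add: commutator_eq Homeo_finv)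

lemma commutator_conj_right:
  "a \<in> Homeo \<Longrightarrow> g \<in> Homeo \<Longrightarrow> w \<in> Homeo \<Longrightarrow>
    commutator a (g \<circ> w \<circ> finv g) = (g \<circ> w \<circ> finv g) \<circ>
      (finv (commutator a g) \<circ> (g \<circ> finv w \<circ> commutator a w \<circ> finv g) \<circ> commutator a g)"
  by (rule ext)
    (simp add: commutator_eq finv_commutator Homeo_finv Homeo_comp Homeo_finv_comp)

lemma commutator_comp_commuting:
  assumes a: "a \<in> Homeo" and b: "b \<in> Homeo" and y: "y \<in> Homeo" and yb: "y \<circ> b = b \<circ> y"
  shows "commutator (a \<circ> y) b = commutator a b"
proof -
  have "y (finv b x) = finv b (y x)" for x
    using fun_cong[OF yb, of "finv b x"] b by (metis Homeo_inv_f_f Homeo_f_inv_f o_apply)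
  then show ?thesis
    using a b y by (intro ext) (simp add: commutator_eq Homeo_comp Homeo_finv_comp)
qed

lemma subgroup_Homeo: "subgroup S homeo_group \<Longrightarrow> S \<subseteq> Homeo"
  using subgroup.subset by fastforce

lemma subgroup_comp: "subgroup S homeo_group \<Longrightarrow> f \<in> S \<Longrightarrow> g \<in> S \<Longrightarrow> g \<circ> f \<in> S"
  using subgroup.m_closed by fastforce

lemma subgroup_finv: "subgroup S homeo_group \<Longrightarrow> f \<in> S \<Longrightarrow> finv f \<in> S"
  using subgroup.m_inv_closed subgroup_Homeo by fastforce

lemma subgroup_id: "subgroup S homeo_group \<Longrightarrow> id \<in> S"
  using subgroup.one_closed by fastforce

lemma subgroup_conj: "subgroup S homeo_group \<Longrightarrow> g \<in> S \<Longrightarrow> k \<in> S \<Longrightarrow> finv g \<circ> k \<circ> g \<in> S"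
  by (metis subgroup_comp subgroup_finv o_assoc)

lemma subgroup_commutator: "subgroup S homeo_group \<Longrightarrow> a \<in> S \<Longrightarrow> b \<in> S \<Longrightarrow> commutator a b \<in> S"
  using subgroup_Homeo[of S] by (simp add: commutator_eq subset_iff subgroup_comp subgroup_finv)

lemma subgroup_HomeoI:
  assumes "M \<subseteq> Homeo" "id \<in> M" "\<And>a b. a \<in> M \<Longrightarrow> b \<in> M \<Longrightarrow> b \<circ> a \<in> M"
    "\<And>a. a \<in> M \<Longrightarrow> finv a \<in> M"
  shows "subgroup M homeo_group"
  using assms by (intro subgroup.intro) (auto simp: subset_iff)

lemma normal_subgroup_HomeoI:
  assumes G: "subgroup G homeo_group" and MG: "M \<subseteq> G" and M: "subgroup M homeo_group"
    and conj: "\<And>g m. g \<in> G \<Longrightarrow> m \<in> M \<Longrightarrow> finv g \<circ> m \<circ> g \<in> M"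
  shows "M \<lhd> homeo_group\<lparr>carrier := G\<rparr>"
proof -
  interpret G': group "homeo_group\<lparr>carrier := G\<rparr>"
    using group.subgroup_imp_group[OF group_homeo_group G] .
  show ?thesis
    unfolding G'.normal_inv_iff
  proof (intro conjI ballI)
    show "subgroup M (homeo_group\<lparr>carrier := G\<rparr>)"
      using group.subgroup_incl[OF group_homeo_group M G MG] .
    fix x h assume "x \<in> carrier (homeo_group\<lparr>carrier := G\<rparr>)" and h: "h \<in> M"
    then have "x \<in> G" by simp
    then show "x \<otimes>\<^bsub>homeo_group\<lparr>carrier := G\<rparr>\<^esub> h \<otimes>\<^bsub>homeo_group\<lparr>carrier := G\<rparr>\<^esub>
        inv\<^bsub>homeo_group\<lparr>carrier := G\<rparr>\<^esub> x \<in> M"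
      using group.m_inv_consistent[OF group_homeo_group G] subgroup_Homeo[OF G] conj h
      by (auto simp: o_assoc)
  qed
qed

lemma normal_subgroup_HomeoD:
  assumes H: "subgroup H homeo_group" and N: "N \<lhd> homeo_group\<lparr>carrier := H\<rparr>"
  shows "subgroup N homeo_group" "N \<subseteq> H" "\<And>h n. h \<in> H \<Longrightarrow> n \<in> N \<Longrightarrow> finv h \<circ> n \<circ> h \<in> N"
proof -
  have N': "subgroup N (homeo_group\<lparr>carrier := H\<rparr>)" using N normal_imp_subgroup by blast
  show "subgroup N homeo_group" using group.incl_subgroup[OF group_homeo_group H N'] .
  show "N \<subseteq> H" using subgroup.subset[OF N'] by simp
  fix h n assume "h \<in> H" "n \<in> N"
  then have "h \<otimes>\<^bsub>homeo_group\<lparr>carrier := H\<rparr>\<^esub> n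
      \<otimes>\<^bsub>homeo_group\<lparr>carrier := H\<rparr>\<^esub> inv\<^bsub>homeo_group\<lparr>carrier := H\<rparr>\<^esub> h \<in> N"
    using normal.inv_op_closed2[OF N] by simp
  then show "finv h \<circ> n \<circ> h \<in> N"
    using group.m_inv_consistent[OF group_homeo_group H \<open>h \<in> H\<close>] subgroup_Homeo[OF H] \<open>h \<in> H\<close>
    by (auto simp: o_assoc)
qed

lemma normal_commutator:
  assumes H: "subgroup H homeo_group" and N: "N \<lhd> homeo_group\<lparr>carrier := H\<rparr>"
    and n: "n \<in> N" and h: "h \<in> H"
  shows "commutator n h \<in> N"
proof -
  note N_props = normal_subgroup_HomeoD[OF H N]
  have hH: "h \<in> Homeo" and nH: "n \<in> Homeo" using h n N_props(2) subgroup_Homeo[OF H] by auto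
  have "finv (finv h) \<circ> n \<circ> finv h \<in> N" using N_props(3)[OF subgroup_finv[OF H h] n] .
  then have "(h \<circ> n \<circ> finv h) \<circ> finv n \<in> N"
    using subgroup_comp[OF N_props(1) subgroup_finv[OF N_props(1) n]] hH by simp
  then show ?thesis using commutator_eq[OF nH hH] by (simp add: o_assoc)
qed

lemma simple_subgroup_normal_eq:
  assumes "simple_subgroup G" "N \<lhd> homeo_group\<lparr>carrier := G\<rparr>" "f \<in> N" "f \<noteq> id"
  shows "N = G"
  using assms unfolding simple_subgroup_def by blast

lemma simple_subgroup_eqI:
  assumes G: "subgroup G homeo_group" and "simple_subgroup G"
    and K: "subgroup K homeo_group" "K \<subseteq> G"
    and conj: "\<And>g k. g \<in> G \<Longrightarrow> k \<in> K \<Longrightarrow> finv g \<circ> k \<circ> g \<in> K"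
    and "f \<in> K" "f \<noteq> id"
  shows "K = G"
  using assms normal_subgroup_HomeoI[OF G K(2,1) conj] by (intro simple_subgroup_normal_eq) auto

lemma simple_subgroup_generate_eq:
  assumes G: "subgroup G homeo_group" and "simple_subgroup G" and R: "R \<subseteq> G"
    and conj: "\<And>g r. g \<in> G \<Longrightarrow> r \<in> R \<Longrightarrow> finv g \<circ> r \<circ> g \<in> R"
    and "f \<in> R" "f \<noteq> id"
  shows "generate homeo_group R = G"
proof -
  interpret G': group "homeo_group\<lparr>carrier := G\<rparr>"
    using group.subgroup_imp_group[OF group_homeo_group G] .
  have "generate (homeo_group\<lparr>carrier := G\<rparr>) R \<lhd> homeo_group\<lparr>carrier := G\<rparr>"
  proof (rule G'.normal_generateI)
    fix r g assume "r \<in> R" "g \<in> carrier (homeo_group\<lparr>carrier := G\<rparr>)"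
    then show "g \<otimes>\<^bsub>homeo_group\<lparr>carrier := G\<rparr>\<^esub> r \<otimes>\<^bsub>homeo_group\<lparr>carrier := G\<rparr>\<^esub>
        inv\<^bsub>homeo_group\<lparr>carrier := G\<rparr>\<^esub> g \<in> R"
      using group.m_inv_consistent[OF group_homeo_group G] subgroup_Homeo[OF G] conj
      by (auto simp: o_assoc)
  qed (use R in simp)
  then have "generate homeo_group R \<lhd> homeo_group\<lparr>carrier := G\<rparr>"
    using group.generate_consistent[OF group_homeo_group R G] by simp
  then show ?thesis
    using assms generate.incl[of f R] by (intro simple_subgroup_normal_eq) auto
qed

lemma fin_gen_generate_insert:
  assumes G: "subgroup G homeo_group" and "fin_gen G" and x: "x \<in> Homeo"
  shows "fin_gen (generate homeo_group (G \<union> {x}))"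
proof -
  obtain S where S: "finite S" "S \<subseteq> G" "generate homeo_group S = G"
    using \<open>fin_gen G\<close> by (auto simp: fin_gen_def)
  have carrier: "S \<union> {x} \<subseteq> carrier homeo_group"
    using S(2) subgroup_Homeo[OF G] x by auto
  have "G \<subseteq> generate homeo_group (S \<union> {x})"
    using group.mono_generate[OF group_homeo_group, of S "S \<union> {x}"] S(3) by blast
  then have "generate homeo_group (G \<union> {x}) \<subseteq> generate homeo_group (S \<union> {x})"
    by (intro group.generate_subgroup_incl[OF group_homeo_group]
        group.generate_is_subgroup[OF group_homeo_group carrier]) (auto intro: generate.incl)
  moreover have "generate homeo_group (S \<union> {x}) \<subseteq> generate homeo_group (G \<union> {x})"
    using S(2) by (intro group.mono_generate[OF group_homeo_group]) auto
  moreover have "S \<union> {x} \<subseteq> generate homeo_group (G \<union> {x})"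
    using S(2) by (auto intro: generate.incl)
  ultimately show ?thesis
    using S(1) unfolding fin_gen_def by (intro exI[of _ "S \<union> {x}"]) auto
qed

section \<open>Supports\<close>

lemma supp_image_mem: "inj f \<Longrightarrow> x \<in> supp f \<Longrightarrow> f x \<in> supp f"
  unfolding supp_def by (auto dest: injD)

lemma disjoint_supp_commute:
  assumes f: "inj f" and g: "inj g" and disjoint: "supp f \<inter> supp g = {}"
  shows "f \<circ> g = g \<circ> f"
proof
  fix x
  show "(f \<circ> g) x = (g \<circ> f) x"
    using supp_image_mem[OF f, of x] supp_image_mem[OF g, of x] disjoint
    by (cases "x \<in> supp f"; cases "x \<in> supp g") (auto simp: supp_def)
qed

lemma supp_finv: "f \<in> Homeo \<Longrightarrow> supp (finv f) = supp f"
  unfolding supp_def by (metis Homeo_inv_f_f Homeo_f_inv_f)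

lemma supp_conj: "f \<in> Homeo \<Longrightarrow> supp (f \<circ> g \<circ> finv f) = f ` supp g"
proof -
  assume f: "f \<in> Homeo"
  then have "x \<in> supp (f \<circ> g \<circ> finv f) \<longleftrightarrow> finv f x \<in> supp g" for x
    by (simp add: supp_def) (metis Homeo_inv_f_f Homeo_f_inv_f)
  then show ?thesis using f by (force simp: image_iff)
qed

lemma commutator_disjoint_supp:
  assumes "a \<in> Homeo" "b \<in> Homeo" "supp a \<inter> supp b = {}"
  shows "commutator a b = id"
proof -
  have "b \<circ> a = a \<circ> b"
    using assms by (intro disjoint_supp_commute) (auto simp: Homeo_inj)
  then show ?thesis
    using assms by (intro ext) (simp add: commutator_eq fun_eq_iff)
qed

section \<open>Vigorous sets of homeomorphisms\<close>

lemma vigorousD: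
  "vigorous S \<Longrightarrow> clopen A \<Longrightarrow> clopen B \<Longrightarrow> clopen C \<Longrightarrow> B \<noteq> {} \<Longrightarrow> C \<noteq> {} \<Longrightarrow>
    B \<subset> A \<Longrightarrow> C \<subset> A \<Longrightarrow> \<exists>g\<in>S. supp g \<subseteq> A \<and> g ` B \<subseteq> C"
  unfolding vigorous_def by blast

lemma vigorous_mono: "vigorous S \<Longrightarrow> S \<subseteq> T \<Longrightarrow> vigorous T"
  unfolding vigorous_def by blast

lemma vigorous_nontrivial_supported:
  assumes vig: "vigorous S" and U: "clopen U" "U \<noteq> {}"
  obtains g where "g \<in> S" "supp g \<subseteq> U" "g \<noteq> id"
proof -
  have "openin cantor U" using U(1) by (simp add: clopen_def)
  then obtain B C where BC: "clopen B" "clopen C" "B \<noteq> {}" "C \<noteq> {}" "B \<subset> U" "C \<subset> U" "B \<inter> C = {}"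
    using U(2) by (rule clopen_split)
  obtain g where g: "g \<in> S" "supp g \<subseteq> U" "g ` B \<subseteq> C"
    using vigorousD[OF vig U(1) BC(1-6)] by blast
  obtain b where b: "b \<in> B" using BC(3) by blast
  then have "g b \<in> C" "b \<notin> C" using g(3) BC(7) by auto
  then have "g \<noteq> id" by auto
  with g(1,2) show ?thesis by (rule that)
qed

lemma commutator_nontrivial_displaced:
  assumes g: "g \<in> Homeo" "supp g \<subseteq> V" "g \<noteq> id" and k: "k \<in> Homeo" "k ` V \<inter> V = {}"
  shows "commutator g k \<noteq> id"
proof -
  obtain r where r: "g r \<noteq> r" using g(3) by (auto simp: fun_eq_iff)
  then have "r \<in> V" using g(2) by (auto simp: supp_def)
  then have "finv k r \<notin> V" using k by (metis Homeo_f_inv_f disjoint_iff imageI)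
  then have "g (finv k r) = finv k r" using g(2) by (auto simp: supp_def)
  then have "commutator g k (g r) = r" using g(1) k(1) by (simp add: commutator_eq)
  then show ?thesis using r by auto
qed

text \<open>
  The double commutator trick: \<open>[n, g]\<close> is \<open>g\<close> times a conjugate of \<open>g\<^sup>-\<^sup>1\<close> supported in \<open>n U\<close>,
  which commutes with \<open>k\<close> because \<open>supp k \<subseteq> U\<close> and \<open>n U \<inter> U = {}\<close>.
\<close>
lemma vigorous_double_commutator:
  assumes vig: "vigorous S" and S: "S \<subseteq> Homeo" and n: "n \<in> Homeo" "n \<noteq> id"
  obtains g k where "g \<in> S" "k \<in> S" "commutator (commutator n g) k = commutator g k"
    "commutator g k \<noteq> id"
proof -
  obtain p where "n p \<noteq> p" using n(2) by (auto simp: fun_eq_iff)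
  then obtain U where U: "clopen U" "p \<in> U" "n ` U \<inter> U = {}"
    using continuous_map_moves_clopen[OF Homeo_continuous[OF n(1)]] by (metis UNIV_I openin_topspace topspace_cantor)
  obtain k where k: "k \<in> S" "supp k \<subseteq> U" "k \<noteq> id"
    using vigorous_nontrivial_supported[OF vig U(1)] U(2) by blast
  have kH: "k \<in> Homeo" using k S by blast
  obtain q where q: "k q \<noteq> q" using k(3) by (auto simp: fun_eq_iff)
  then have "q \<in> U" using k(2) by (auto simp: supp_def)
  then obtain V where V: "clopen V" "q \<in> V" "V \<subseteq> U" "k ` V \<inter> V = {}"
    using continuous_map_moves_clopen[OF Homeo_continuous[OF kH] q] U(1) by (metis clopen_def)
  obtain g where g: "g \<in> S" "supp g \<subseteq> V" "g \<noteq> id"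
    using vigorous_nontrivial_supported[OF vig V(1)] V(2) by blast
  have gH: "g \<in> Homeo" using g S by blast
  define y where "y = n \<circ> finv g \<circ> finv n"
  have yH: "y \<in> Homeo" unfolding y_def by (simp add: Homeo_comp Homeo_finv n gH)
  have "supp y \<subseteq> n ` U"
    using supp_conj[OF n(1), of "finv g"] supp_finv[OF gH] g(2) V(3) by (auto simp: y_def)
  then have "y \<circ> k = k \<circ> y"
    using U(3) k(2) yH kH by (intro disjoint_supp_commute) (auto simp: Homeo_inj)
  moreover have "commutator n g = g \<circ> y"
    by (simp add: commutator_eq n(1) gH y_def o_assoc)
  ultimately have "commutator (commutator n g) k = commutator g k"
    using commutator_comp_commuting[OF gH kH yH] by simp
  moreover have "commutator g k \<noteq> id"
    using commutator_nontrivial_displaced[OF gH g(2,3) kH V(4)] .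
  ultimately show ?thesis using g(1) k(1) that by blast
qed

section \<open>Preimages under \<open>g \<mapsto> [a, g]\<close>\<close>

definition comm_preimage ::
    "(point \<Rightarrow> point) \<Rightarrow> (point \<Rightarrow> point) set \<Rightarrow> (point \<Rightarrow> point) set \<Rightarrow> (point \<Rightarrow> point) set" where
  "comm_preimage a G T = {g \<in> G. commutator a g \<in> T}"

lemma subgroup_comm_preimage:
  assumes G: "subgroup G homeo_group" and a: "a \<in> Homeo" and T: "subgroup T homeo_group"
    and conj: "\<And>g t. g \<in> G \<Longrightarrow> t \<in> T \<Longrightarrow> finv g \<circ> t \<circ> g \<in> T"
  shows "subgroup (comm_preimage a G T) homeo_group"
proof (rule subgroup_HomeoI)
  show "comm_preimage a G T \<subseteq> Homeo" using subgroup_Homeo[OF G] by (auto simp: comm_preimage_def)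
  have "commutator a id = id" by (rule ext) (simp add: commutator_eq a Homeo_id)
  then show "id \<in> comm_preimage a G T"
    using subgroup_id[OF G] subgroup_id[OF T] by (simp add: comm_preimage_def)
next
  fix f g assume "f \<in> comm_preimage a G T" "g \<in> comm_preimage a G T"
  then have f: "f \<in> G" "commutator a f \<in> T" and g: "g \<in> G" "commutator a g \<in> T"
    by (auto simp: comm_preimage_def)
  have fH: "f \<in> Homeo" and gH: "g \<in> Homeo" using f(1) g(1) subgroup_Homeo[OF G] by auto
  have "finv (finv g) \<circ> commutator a f \<circ> finv g \<in> T"
    by (rule conj[OF subgroup_finv[OF G g(1)] f(2)])
  then have "(g \<circ> commutator a f \<circ> finv g) \<circ> commutator a g \<in> T"
    using gH by (simp add: subgroup_comp[OF T g(2)])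
  then have "commutator a (g \<circ> f) \<in> T"
    by (simp only: commutator_comp_right[OF a fH gH])
  then show "g \<circ> f \<in> comm_preimage a G T"
    using subgroup_comp[OF G f(1) g(1)] by (simp add: comm_preimage_def)
next
  fix f assume "f \<in> comm_preimage a G T"
  then have f: "f \<in> G" "commutator a f \<in> T" by (auto simp: comm_preimage_def)
  have fH: "f \<in> Homeo" using f(1) subgroup_Homeo[OF G] by auto
  have "finv f \<circ> finv (commutator a f) \<circ> f \<in> T"
    by (rule conj[OF f(1) subgroup_finv[OF T f(2)]])
  then have "commutator a (finv f) \<in> T"
    by (simp only: commutator_finv_right[OF a fH])
  then show "finv f \<in> comm_preimage a G T"
    using subgroup_finv[OF G f(1)] by (simp add: comm_preimage_def)
qed

lemma normal_comm_preimage: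
  assumes G: "subgroup G homeo_group" and a: "a \<in> Homeo" and T: "subgroup T homeo_group"
    and GT: "G \<subseteq> T"
    and conj: "\<And>g t. g \<in> G \<Longrightarrow> t \<in> T \<Longrightarrow> finv (commutator a g) \<circ> t \<circ> commutator a g \<in> T"
  shows "comm_preimage a G T \<lhd> homeo_group\<lparr>carrier := G\<rparr>"
proof (rule normal_subgroup_HomeoI[OF G])
  show "comm_preimage a G T \<subseteq> G" by (auto simp: comm_preimage_def)
  show "subgroup (comm_preimage a G T) homeo_group"
    using subgroup_comm_preimage[OF G a T] GT by (meson subgroup_conj subsetD T)
next
  fix g w assume g: "g \<in> G" and "w \<in> comm_preimage a G T"
  then have w: "w \<in> G" "commutator a w \<in> T" by (auto simp: comm_preimage_def)
  define b where "b = finv g"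
  have b: "b \<in> G" "b \<in> Homeo" and wH: "w \<in> Homeo"
    using subgroup_finv[OF G g] subgroup_Homeo[OF G] w(1) by (auto simp: b_def)
  have conj_eq: "finv g \<circ> w \<circ> g = b \<circ> w \<circ> finv b"
    using g subgroup_Homeo[OF G] by (auto simp: b_def)
  have bwb: "b \<circ> w \<circ> finv b \<in> G"
    using subgroup_conj[OF G subgroup_finv[OF G b(1)] w(1)] b(2) by simp
  have "finv w \<circ> commutator a w \<in> T"
    using subgroup_comp[OF T w(2) subgroup_finv[OF T]] GT w(1) by blast
  then have "finv (finv b) \<circ> (finv w \<circ> commutator a w) \<circ> finv b \<in> T"
    using subgroup_conj[OF T subgroup_finv[OF T]] GT b(1) by blast
  then have "b \<circ> finv w \<circ> commutator a w \<circ> finv b \<in> T"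
    using b(2) by (simp add: o_assoc)
  then have "finv (commutator a b) \<circ> (b \<circ> finv w \<circ> commutator a w \<circ> finv b) \<circ> commutator a b \<in> T"
    by (rule conj[OF b(1)])
  then have "(b \<circ> w \<circ> finv b) \<circ>
      (finv (commutator a b) \<circ> (b \<circ> finv w \<circ> commutator a w \<circ> finv b) \<circ> commutator a b) \<in> T"
    using subgroup_comp[OF T] bwb GT by blast
  then have "commutator a (b \<circ> w \<circ> finv b) \<in> T"
    by (simp only: commutator_conj_right[OF a b(2) wH])
  then show "finv g \<circ> w \<circ> g \<in> comm_preimage a G T"
    using bwb conj_eq by (simp add: comm_preimage_def)
qed

section \<open>Adjoining the commutator \<open>[\<delta>, \<gamma>]\<close>\<close>

locale vigorous_extension =
  fixes G :: "(point \<Rightarrow> point) set" and D :: "point set" and \<gamma> \<delta> :: "point \<Rightarrow> point"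
  assumes G_subgroup: "subgroup G homeo_group"
    and G_simple: "simple_subgroup G"
    and G_vigorous: "vigorous G"
    and D_K: "D \<in> K_C"
    and \<gamma>_in_G: "\<gamma> \<in> G"
    and \<gamma>D_disjoint: "\<gamma> ` D \<inter> D = {}"
    and \<gamma>D_not_cover: "\<gamma> ` D \<union> D \<noteq> topspace cantor"
    and \<delta>_Homeo: "\<delta> \<in> Homeo"
    and \<delta>_fixes: "\<forall>p \<in> topspace cantor - D. \<delta> p = p"
begin

abbreviation extension :: "(point \<Rightarrow> point) set" where
  "extension \<equiv> generate homeo_group (G \<union> {commutator \<delta> \<gamma>})"

lemma G_Homeo: "G \<subseteq> Homeo"
  by (rule subgroup_Homeo[OF G_subgroup])

lemma \<gamma>_Homeo: "\<gamma> \<in> Homeo"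
  using G_Homeo \<gamma>_in_G by blast

lemma extension_subgroup: "subgroup extension homeo_group"
  using G_Homeo commutator_Homeo[OF \<delta>_Homeo \<gamma>_Homeo]
  by (intro group.generate_is_subgroup[OF group_homeo_group]) auto

lemma G_subset_extension: "G \<subseteq> extension"
  by (auto intro: generate.incl)

lemma commutator_\<delta>\<gamma>_in_extension: "commutator \<delta> \<gamma> \<in> extension"
  by (auto intro: generate.incl)

lemma D_clopen: "clopen D" and D_nonempty: "D \<noteq> {}" and D_ne_UNIV: "D \<noteq> UNIV"
  using D_K by (auto simp: K_C_def)

lemma supp_\<delta>: "supp \<delta> \<subseteq> D"
  using \<delta>_fixes by (auto simp: supp_def)

lemma off_D_in_comm_preimage:
  assumes "f \<in> G" "supp f \<inter> D = {}" "subgroup T homeo_group"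
  shows "f \<in> comm_preimage \<delta> G T"
proof -
  have "commutator \<delta> f = id"
    using assms G_Homeo supp_\<delta> by (intro commutator_disjoint_supp[OF \<delta>_Homeo]) auto
  then show ?thesis using assms subgroup_id by (simp add: comm_preimage_def)
qed

lemma nontrivial_off_D:
  obtains f where "f \<in> G" "supp f \<inter> D = {}" "f \<noteq> id"
proof -
  have "clopen (- D)" "- D \<noteq> {}" using clopen_Compl[OF D_clopen] D_ne_UNIV by auto
  then show ?thesis by (elim vigorous_nontrivial_supported[OF G_vigorous]) (auto intro: that)
qed

lemma comm_preimage_extension_subgroup: "subgroup (comm_preimage \<delta> G extension) homeo_group"
  using extension_subgroup G_subset_extension
  by (intro subgroup_comm_preimage[OF G_subgroup \<delta>_Homeo]) (auto intro: subgroup_conj)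

lemma \<gamma>_in_comm_preimage: "\<gamma> \<in> comm_preimage \<delta> G extension"
  using \<gamma>_in_G commutator_\<delta>\<gamma>_in_extension by (simp add: comm_preimage_def)

lemma map_\<gamma>D_into:
  assumes "clopen C" "C \<noteq> {}" "C \<subset> - D"
  obtains f where "f \<in> G" "supp f \<inter> D = {}" "f ` \<gamma> ` D \<subseteq> C"
proof -
  have "\<gamma> ` D \<subset> - D" using \<gamma>D_disjoint \<gamma>D_not_cover by auto
  moreover have "\<gamma> ` D \<noteq> {}" using D_nonempty by blast
  ultimately obtain f where "f \<in> G" "supp f \<subseteq> - D" "f ` \<gamma> ` D \<subseteq> C"
    using vigorousD[OF G_vigorous clopen_Compl[OF D_clopen] clopen_image_Homeo[OF \<gamma>_Homeo D_clopen]
        \<open>clopen C\<close>] assms(2,3) by blast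
  then show ?thesis by (intro that) auto
qed

lemma comm_preimage_moves_D_into:
  assumes g: "g \<in> G"
  obtains w where "w \<in> comm_preimage \<delta> G extension" "w ` D \<subseteq> g ` D"
proof -
  note W = comm_preimage_extension_subgroup
  have gD: "clopen (g ` D)" "g ` D \<noteq> {}"
    using clopen_image_Homeo[OF _ D_clopen] G_Homeo g D_nonempty by auto
  show ?thesis
  proof (cases "g ` D \<inter> D = {}")
    case False
    define V where "V = g ` D \<inter> D"
    have "clopen (\<gamma> ` V)" "\<gamma> ` V \<noteq> {}" "\<gamma> ` V \<subset> - D"
      using clopen_image_Homeo[OF \<gamma>_Homeo clopen_Int[OF gD(1) D_clopen]] False \<gamma>D_disjoint
        \<gamma>D_not_cover by (auto simp: V_def)
    then obtain f where f: "f \<in> G" "supp f \<inter> D = {}" "f ` \<gamma> ` D \<subseteq> \<gamma> ` V"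
      by (rule map_\<gamma>D_into)
    \<comment> \<open>conjugating by \<open>\<gamma>\<close> moves \<open>f\<close>, which maps \<open>\<gamma> D\<close> into \<open>\<gamma> V\<close>, to a map of \<open>D\<close> into \<open>V\<close>\<close>
    have "finv \<gamma> \<circ> f \<circ> \<gamma> \<in> comm_preimage \<delta> G extension"
      using subgroup_conj[OF W \<gamma>_in_comm_preimage off_D_in_comm_preimage[OF f(1,2) extension_subgroup]] .
    moreover have "(finv \<gamma> \<circ> f \<circ> \<gamma>) ` D \<subseteq> g ` D"
      using f(3) \<gamma>_Homeo by (force simp: V_def)
    ultimately show ?thesis by (rule that)
  next
    case True
    have "openin cantor (g ` D)" using gD(1) by (simp add: clopen_def)
    then obtain B C where B: "clopen B" "clopen C" "B \<noteq> {}" "C \<noteq> {}" "B \<subset> g ` D" "C \<subset> g ` D"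
        "B \<inter> C = {}"
      using gD(2) by (rule clopen_split)
    moreover have "B \<subset> - D" using B(5) True by blast
    ultimately obtain f where f: "f \<in> G" "supp f \<inter> D = {}" "f ` \<gamma> ` D \<subseteq> B"
      using map_\<gamma>D_into by blast
    have "f \<circ> \<gamma> \<in> comm_preimage \<delta> G extension"
      using subgroup_comp[OF W \<gamma>_in_comm_preimage off_D_in_comm_preimage[OF f(1,2) extension_subgroup]] .
    moreover have "(f \<circ> \<gamma>) ` D \<subseteq> g ` D" using f(3) B(5) by (auto simp: image_comp[symmetric])
    ultimately show ?thesis by (rule that)
  qed
qed

definition D_avoiding :: "(point \<Rightarrow> point) set" where
  "D_avoiding = {k \<in> G. \<exists>g\<in>G. supp k \<inter> g ` D = {}}"

lemma D_avoiding_conj: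
  assumes g: "g \<in> G" and k: "k \<in> D_avoiding"
  shows "finv g \<circ> k \<circ> g \<in> D_avoiding"
proof -
  obtain g0 where g0: "g0 \<in> G" "k \<in> G" "supp k \<inter> g0 ` D = {}" using k by (auto simp: D_avoiding_def)
  have gH: "finv g \<in> Homeo" "g \<in> Homeo" using G_Homeo g Homeo_finv by auto
  have "supp (finv g \<circ> k \<circ> g) \<inter> (finv g \<circ> g0) ` D = finv g ` (supp k \<inter> g0 ` D)"
    using supp_conj[OF gH(1), of k] gH(2) image_Int[OF Homeo_inj[OF gH(1)]] by (simp add: image_comp)
  then have "supp (finv g \<circ> k \<circ> g) \<inter> (finv g \<circ> g0) ` D = {}"
    using g0(3) by simp
  moreover have "finv g \<circ> g0 \<in> G" using subgroup_comp[OF G_subgroup g0(1) subgroup_finv[OF G_subgroup g]] .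
  ultimately show ?thesis
    using subgroup_conj[OF G_subgroup g g0(2)] unfolding D_avoiding_def by blast
qed

lemma D_avoiding_subset_comm_preimage: "D_avoiding \<subseteq> comm_preimage \<delta> G extension"
proof
  fix k assume "k \<in> D_avoiding"
  then obtain g0 where g0: "g0 \<in> G" "k \<in> G" "supp k \<inter> g0 ` D = {}" by (auto simp: D_avoiding_def)
  obtain w where w: "w \<in> comm_preimage \<delta> G extension" "w ` D \<subseteq> g0 ` D"
    using comm_preimage_moves_D_into[OF g0(1)] by blast
  have wG: "w \<in> G" and wH: "w \<in> Homeo" using w(1) G_Homeo by (auto simp: comm_preimage_def)
  define k' where "k' = finv w \<circ> k \<circ> w"
  have "supp k' = finv w ` supp k"
    using supp_conj[OF Homeo_finv[OF wH], of k] wH by (simp add: k'_def)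
  then have "supp k' \<inter> D = {}"
    using g0(3) w(2) wH by (auto simp: disjoint_iff) (metis Homeo_f_inv_f image_subset_iff)
  then have "k' \<in> comm_preimage \<delta> G extension"
    using off_D_in_comm_preimage[OF _ _ extension_subgroup] subgroup_conj[OF G_subgroup wG g0(2)]
    by (simp add: k'_def)
  moreover have "k = finv (finv w) \<circ> k' \<circ> finv w" using wH by (auto simp: k'_def)
  ultimately show "k \<in> comm_preimage \<delta> G extension"
    using subgroup_conj[OF comm_preimage_extension_subgroup subgroup_finv[OF comm_preimage_extension_subgroup w(1)]]
    by metis
qed

lemma generate_D_avoiding: "generate homeo_group D_avoiding = G"
proof -
  obtain f where f: "f \<in> G" "supp f \<inter> D = {}" "f \<noteq> id" by (rule nontrivial_off_D)
  then have "f \<in> D_avoiding"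
    unfolding D_avoiding_def using subgroup_id[OF G_subgroup] by (intro CollectI conjI bexI[of _ id]) auto
  then show ?thesis
    using simple_subgroup_generate_eq[OF G_subgroup G_simple _ D_avoiding_conj] f(3)
    by (auto simp: D_avoiding_def)
qed

lemma commutator_\<delta>_in_extension: "g \<in> G \<Longrightarrow> commutator \<delta> g \<in> extension"
  using group.generate_subgroup_incl[OF group_homeo_group D_avoiding_subset_comm_preimage
      comm_preimage_extension_subgroup] generate_D_avoiding
  by (auto simp: comm_preimage_def)

lemma normal_extension_contains_G:
  assumes N: "N \<lhd> homeo_group\<lparr>carrier := extension\<rparr>" and nontrivial: "N \<noteq> {id}"
  shows "G \<subseteq> N"
proof -
  note N_props = normal_subgroup_HomeoD[OF extension_subgroup N]
  obtain n where n: "n \<in> N" "n \<noteq> id" using nontrivial subgroup_id[OF N_props(1)] by blast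
  then obtain g k where gk: "g \<in> G" "k \<in> G" "commutator (commutator n g) k = commutator g k"
      "commutator g k \<noteq> id"
    using vigorous_double_commutator[OF G_vigorous G_Homeo] N_props(2) subgroup_Homeo[OF extension_subgroup]
    by blast
  have "commutator g k \<in> N"
    using gk G_subset_extension normal_commutator[OF extension_subgroup N]
    by (metis n(1) subsetD)
  then have "commutator g k \<in> N \<inter> G" using subgroup_commutator[OF G_subgroup gk(1,2)] by blast
  moreover have "subgroup (N \<inter> G) homeo_group"
    using N_props(1) G_subgroup subgroup_Homeo
    by (intro subgroup_HomeoI) (auto intro: subgroup_id subgroup_comp subgroup_finv)
  ultimately have "N \<inter> G = G"
    using gk(4) N_props(3) G_subset_extension
    by (intro simple_subgroup_eqI[OF G_subgroup G_simple]) (auto intro: subgroup_conj[OF G_subgroup])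
  then show ?thesis by blast
qed

lemma normal_extension_eq:
  assumes N: "N \<lhd> homeo_group\<lparr>carrier := extension\<rparr>" and GN: "G \<subseteq> N"
  shows "N = extension"
proof -
  note N_props = normal_subgroup_HomeoD[OF extension_subgroup N]
  have normal: "comm_preimage \<delta> G N \<lhd> homeo_group\<lparr>carrier := G\<rparr>"
    using N_props commutator_\<delta>_in_extension
    by (intro normal_comm_preimage[OF G_subgroup \<delta>_Homeo _ GN]) auto
  obtain f where "f \<in> G" "supp f \<inter> D = {}" "f \<noteq> id" by (rule nontrivial_off_D)
  then have "comm_preimage \<delta> G N = G"
    using off_D_in_comm_preimage[OF _ _ N_props(1)] simple_subgroup_normal_eq[OF G_simple normal]
    by blast
  then have "commutator \<delta> \<gamma> \<in> N" using \<gamma>_in_G by (auto simp: comm_preimage_def)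
  then have "extension \<subseteq> N"
    using GN by (intro group.generate_subgroup_incl[OF group_homeo_group _ N_props(1)]) auto
  then show ?thesis using N_props(2) by blast
qed

lemma extension_simple: "simple_subgroup extension"
  unfolding simple_subgroup_def
proof (intro conjI allI impI)
  have "G \<noteq> {id}" using G_simple by (simp add: simple_subgroup_def)
  then show "extension \<noteq> {id}" using G_subset_extension subgroup_id[OF G_subgroup] by blast
next
  fix N assume "N \<lhd> homeo_group\<lparr>carrier := extension\<rparr>"
  then show "N = {id} \<or> N = extension"
    using normal_extension_contains_G normal_extension_eq by blast
qed

end

theorem proposition2p19:
  fixes G :: "(point \<Rightarrow> point) set" and D :: "point set"
    and \<gamma> \<delta> :: "point \<Rightarrow> point"
  assumes G_sub: "subgroup G homeo_group"
    and G_simple: "simple_subgroup G"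
    and G_vig: "vigorous G"
    and D_K: "D \<in> K_C"
    and \<gamma>_G: "\<gamma> \<in> G"
    and disj: "\<gamma> ` D \<inter> D = {}"
    and nonfull: "\<gamma> ` D \<union> D \<noteq> topspace cantor"
    and \<delta>_homeo: "\<delta> \<in> Homeo"
    and \<delta>_fix: "\<forall>p \<in> topspace cantor - D. \<delta> p = p"
  defines "H \<equiv> generate homeo_group (G \<union> {commutator \<delta> \<gamma>})"
  shows "simple_subgroup H \<and> vigorous H \<and> (fin_gen G \<longrightarrow> fin_gen H)"
proof -
  interpret vigorous_extension G D \<gamma> \<delta>
    by (rule vigorous_extension.intro[OF G_sub G_simple G_vig D_K \<gamma>_G disj nonfull \<delta>_homeo \<delta>_fix])
  show ?thesis
    unfolding H_def
    using extension_simple vigorous_mono[OF G_vig G_subset_extension]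
      fin_gen_generate_insert[OF G_sub _ commutator_Homeo[OF \<delta>_homeo \<gamma>_Homeo]]
    by blast
qed

end
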